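(* Let $\mathcal S\subset\mathbb R^n$ be a finite positive spanning set of unit vectors and $P=\{x: x^\top d\le 1\ \forall d\in\mathcal S\}$. Consider the randomized algorithm which sets $v=\mathbf 0$ and, at each iteration, samples $c$ uniformly from the unit sphere $\{x\in\mathbb R^n:\|x\|=1\}$ (independently across iterations), computes a vertex solution $\bar v$ of the linear program $\max c^\top x$ subject to $x\in P$, and replaces $v$ by $\bar v$ if $\|\bar v\|>\|v\|$; after $k$ iterations it outputs $1/\|v\|$ and $v/\|v\|$. Then, with probability $1$, when run ad infinitum (i.e., as $k\to\infty$), the algorithm finds a minimizer: almost surely there is an iteration after which $v$ is a maximizer of $\|x\|^2$ over $P$, so that $v/\|v\|$ minimizes $\max_{d\in\mathcal S}d^\top u$ over unit vectors $u$ and $1/\|v\|$ equals the cosine measure of $\mathcal S$.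
   Context: A finite set $\{d_1,\dots,d_k\}\subset\mathbb R^n$ is positive spanning if $\{\sum_i\lambda_id_i:\lambda_i\ge0\}=\mathbb R^n$. The cosine measure of a finite set $\mathcal S\subset\mathbb R^n\setminus\{\mathbf 0\}$ is $\operatorname{cm}(\mathcal S)=\min_{\|u\|=1}\max_{d\in\mathcal S}\frac{d^\top u}{\|d\|}$, and its minimizers are the cosine vectors. For such $\mathcal S$ of unit vectors, maximizers $x^*$ of $\|x\|^2$ over $P$ exist and correspond to cosine vectors $x^*/\|x^*\|$ with $\operatorname{cm}(\mathcal S)=1/\|x^*\|$. *)

theory Defs
  imports "HOL-Analysis.Analysis" "HOL-Probability.Probability"
begin

definition positive_spanning :: "'a::euclidean_space set \<Rightarrow> bool" where
  "positive_spanning S \<longleftrightarrow>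
     (\<forall>x. \<exists>l. (\<forall>d\<in>S. l d \<ge> 0) \<and> x = (\<Sum>d\<in>S. l d *\<^sub>R d))"

definition polyP :: "'a::euclidean_space set \<Rightarrow> 'a set" where
  "polyP S = {x. \<forall>d\<in>S. inner x d \<le> 1}"

definition cm_val :: "'a::euclidean_space set \<Rightarrow> 'a \<Rightarrow> real" where
  "cm_val S u = Max ((\<lambda>d. inner d u / norm d) ` S)"

definition cos_measure :: "'a::euclidean_space set \<Rightarrow> real" where
  "cos_measure S = Inf {cm_val S u | u. norm u = 1}"

definition cosine_vector :: "'a::euclidean_space set \<Rightarrow> 'a \<Rightarrow> bool" where
  "cosine_vector S u \<longleftrightarrow> norm u = 1 \<and> (\<forall>w. norm w = 1 \<longrightarrow> cm_val S u \<le> cm_val S w)"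

definition is_vertex_solution :: "'a::euclidean_space set \<Rightarrow> 'a \<Rightarrow> 'a \<Rightarrow> bool" where
  "is_vertex_solution S c v \<longleftrightarrow>
     v \<in> polyP S \<and> v extreme_point_of (polyP S) \<and> (\<forall>x\<in>polyP S. inner c x \<le> inner c v)"

text \<open>Uniform distribution on the unit sphere: radial projection of the uniform
  distribution on the unit ball (the normalized surface measure).\<close>
definition unif_sphere :: "'a::euclidean_space measure" where
  "unif_sphere = distr (uniform_measure lborel (ball 0 1)) borel sgn"

text \<open>State of the algorithm after k iterations, given the sampled directions c
  and the LP solver vert (vert k c = vertex solution computed at iteration k).\<close>
fun alg_v :: "(nat \<Rightarrow> 'a \<Rightarrow> 'a) \<Rightarrow> (nat \<Rightarrow> 'a) \<Rightarrow> nat \<Rightarrow> 'a::euclidean_space" where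
  "alg_v vert c 0 = 0"
| "alg_v vert c (Suc k) =
     (let vb = vert k (c k) in if norm vb > norm (alg_v vert c k) then vb else alg_v vert c k)"

end

theory Submission
  imports Defs
begin

text \<open>P is a compact polytope, so among its finitely many vertices those whose norm is below the
  maximum M have norm at most M - \<eta> for some \<eta> > 0. If c lies within \<eta> / (2 M) of the
  direction u of a norm maximizer, every maximizer y of c \<bullet> x over P has
  norm y \<ge> M - 2 norm (c - u) M > M - \<eta>; so a vertex solution for such c is itself a norm
  maximizer. The uniform distribution on the sphere gives this cap positive probability, hence
  almost surely some iteration samples it, and from then on v is a norm maximizer. Finally a
  norm maximizer v yields the cosine measure 1 / norm v, since w / cm_val S w lies in P for
  every unit vector w.\<close>

lemma positive_spanning_nonempty:
  assumes "positive_spanning S"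
  shows "S \<noteq> {}"
proof
  assume "S = {}"
  obtain b :: 'a where "b \<in> Basis"
    using nonempty_Basis by blast
  with assms \<open>S = {}\<close> show False
    unfolding positive_spanning_def by (auto dest: nonzero_Basis spec[of _ b])
qed

lemma positive_spanning_ex_inner_pos:
  assumes "positive_spanning S" "w \<noteq> 0"
  shows "\<exists>d\<in>S. inner d w > 0"
proof (rule ccontr)
  assume "\<not> ?thesis"
  then have nonpos: "\<And>d. d \<in> S \<Longrightarrow> inner d w \<le> 0"
    by force
  obtain l where l: "\<And>d. d \<in> S \<Longrightarrow> l d \<ge> 0" "w = (\<Sum>d\<in>S. l d *\<^sub>R d)"
    using assms(1) unfolding positive_spanning_def by blast
  have "inner w w = (\<Sum>d\<in>S. l d * inner d w)"
    by (subst (1) l(2)) (simp add: inner_sum_left)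
  also have "\<dots> \<le> 0"
    using l(1) nonpos by (intro sum_nonpos) (simp add: mult_nonneg_nonpos)
  finally show False
    using assms(2) inner_gt_zero_iff[of w] by linarith
qed

lemma inner_le_sum_coeffs_if_in_polyP:
  assumes "x \<in> polyP S" "\<And>d. d \<in> S \<Longrightarrow> l d \<ge> 0"
  shows "inner x (\<Sum>d\<in>S. l d *\<^sub>R d) \<le> (\<Sum>d\<in>S. l d)"
proof -
  have "inner x (\<Sum>d\<in>S. l d *\<^sub>R d) = (\<Sum>d\<in>S. l d * inner x d)"
    by (simp add: inner_sum_right)
  also have "\<dots> \<le> (\<Sum>d\<in>S. l d * 1)"
    using assms by (intro sum_mono mult_left_mono) (auto simp: polyP_def)
  finally show ?thesis
    by simp
qed

lemma bounded_polyP: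
  assumes "positive_spanning S"
  shows "bounded (polyP S)"
proof -
  obtain l where l: "\<And>y d. d \<in> S \<Longrightarrow> l y d \<ge> 0" "\<And>y. y = (\<Sum>d\<in>S. l y d *\<^sub>R d)"
    using assms unfolding positive_spanning_def by metis
  have "\<bar>inner x b\<bar> \<le> (\<Sum>d\<in>S. l b d) + (\<Sum>d\<in>S. l (-b) d)" if "x \<in> polyP S" for x b
  proof -
    have "inner x b \<le> (\<Sum>d\<in>S. l b d)"
      using inner_le_sum_coeffs_if_in_polyP[of x S "l b", OF that l(1)]
      by (simp only: l(2)[symmetric])
    moreover have "inner x (-b) \<le> (\<Sum>d\<in>S. l (-b) d)"
      using inner_le_sum_coeffs_if_in_polyP[of x S "l (-b)", OF that l(1)]
      by (simp only: l(2)[symmetric])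
    moreover have "(\<Sum>d\<in>S. l b d) \<ge> 0" "(\<Sum>d\<in>S. l (-b) d) \<ge> 0"
      using l(1) by (simp_all add: sum_nonneg)
    ultimately show ?thesis
      by auto
  qed
  then have "norm x \<le> (\<Sum>b\<in>Basis. (\<Sum>d\<in>S. l b d) + (\<Sum>d\<in>S. l (-b) d))" if "x \<in> polyP S" for x
    using norm_le_l1[of x] sum_mono[of Basis "\<lambda>b. \<bar>inner x b\<bar>"] that by (meson order_trans)
  then show ?thesis
    unfolding bounded_iff by blast
qed

lemma polyhedron_polyP:
  assumes "finite S"
  shows "polyhedron (polyP S)"
proof -
  have "polyP S = (\<Inter>d\<in>S. {x. d \<bullet> x \<le> 1})"
    by (auto simp: polyP_def inner_commute)
  then show ?thesis
    using assms by (auto intro!: polyhedron_Inter polyhedron_halfspace_le)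
qed

lemma compact_polyP:
  assumes "finite S" "positive_spanning S"
  shows "compact (polyP S)"
  unfolding compact_eq_bounded_closed
  using assms by (simp add: bounded_polyP polyhedron_imp_closed polyhedron_polyP)

lemma subset_polyP_if_unit:
  assumes "\<forall>d\<in>S. norm d = 1"
  shows "S \<subseteq> polyP S"
  unfolding polyP_def
proof (intro subsetI CollectI ballI)
  fix d d' assume "d \<in> S" "d' \<in> S"
  then show "inner d d' \<le> 1"
    using norm_cauchy_schwarz[of d d'] assms by simp
qed

lemma cm_val_unit:
  assumes "\<forall>d\<in>S. norm d = 1"
  shows "cm_val S u = Max ((\<lambda>d. inner d u) ` S)"
  unfolding cm_val_def using assms by (intro arg_cong[where f = Max] image_cong) auto

lemma cosine_vector_of_norm_maximizer:
  assumes fin: "finite S" and ps: "positive_spanning S" and unit: "\<forall>d\<in>S. norm d = 1"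
    and v: "v \<in> polyP S" and vmax: "\<forall>x\<in>polyP S. norm x \<le> norm v"
  shows "cosine_vector S (v /\<^sub>R norm v) \<and> 1 / norm v = cos_measure S"
proof -
  have "norm v \<ge> 1"
    using positive_spanning_nonempty[OF ps] subset_polyP_if_unit[OF unit] vmax unit by fastforce
  then have "v \<noteq> 0"
    by auto
  then have nv: "norm (v /\<^sub>R norm v) = 1"
    by simp
  have lower: "1 / norm v \<le> cm_val S w" if w: "norm w = 1" for w
  proof -
    define m where "m = cm_val S w"
    have ge: "inner d w \<le> m" if "d \<in> S" for d
      unfolding m_def cm_val_unit[OF unit] using fin that by (intro Max_ge) auto
    obtain d where "d \<in> S" "inner d w > 0"
      using positive_spanning_ex_inner_pos[OF ps, of w] w by (metis norm_zero zero_neq_one)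
    then have m: "m > 0"
      using ge by fastforce
    then have "w /\<^sub>R m \<in> polyP S"
      unfolding polyP_def using ge by (auto simp: inner_commute field_simps)
    then have "1 / m \<le> norm v"
      using vmax w m by (auto simp: divide_inverse)
    with m \<open>norm v \<ge> 1\<close> show ?thesis
      unfolding m_def by (simp add: divide_le_eq mult.commute)
  qed
  have "cm_val S (v /\<^sub>R norm v) \<le> 1 / norm v"
    unfolding cm_val_unit[OF unit] using fin positive_spanning_nonempty[OF ps] v \<open>norm v \<ge> 1\<close>
    by (subst Max_le_iff) (auto simp: polyP_def inner_commute inverse_eq_divide divide_right_mono)
  with lower nv have attained: "cm_val S (v /\<^sub>R norm v) = 1 / norm v"
    by (simp add: order_antisym)
  have "cos_measure S = 1 / norm v"
    unfolding cos_measure_def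
    by (rule cInf_eq_minimum)
      (use attained nv lower in \<open>auto intro!: exI[of _ "v /\<^sub>R norm v"]\<close>)
  with attained lower nv show ?thesis
    unfolding cosine_vector_def by auto
qed

lemma finite_gap_below:
  fixes f :: "'a \<Rightarrow> real"
  assumes "finite A"
  obtains \<eta> where "\<eta> > 0" "\<And>a. a \<in> A \<Longrightarrow> f a < M \<Longrightarrow> f a \<le> M - \<eta>"
proof
  let ?G = "insert 1 ((\<lambda>a. M - f a) ` {a\<in>A. f a < M})"
  show "Min ?G > 0"
    using assms by (subst Min_gr_iff) auto
  show "f a \<le> M - Min ?G" if "a \<in> A" "f a < M" for a
  proof -
    have "Min ?G \<le> M - f a"
      using assms that by (intro Min_le) auto
    then show ?thesis
      by simp
  qed
qed

lemma norm_ge_if_inner_le_near_sgn: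
  fixes x y c :: "'a::real_inner"
  assumes "norm y \<le> norm x" "inner c x \<le> inner c y"
  shows "norm x - 2 * norm (c - sgn x) * norm x \<le> norm y"
proof -
  have "inner (sgn x) x = norm x"
    by (cases "x = 0") (simp_all add: sgn_div_norm dot_square_norm power2_eq_square divide_inverse)
  moreover have "inner (sgn x) y \<le> norm y"
    using Cauchy_Schwarz_ineq2[of "sgn x" y] by (auto simp: norm_sgn split: if_splits)
  moreover have "\<bar>inner (c - sgn x) x\<bar> \<le> norm (c - sgn x) * norm x"
    by (rule Cauchy_Schwarz_ineq2)
  moreover have "\<bar>inner (c - sgn x) y\<bar> \<le> norm (c - sgn x) * norm x"
    using Cauchy_Schwarz_ineq2[of "c - sgn x" y] assms(1)
    by (meson mult_left_mono norm_ge_zero order_trans)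
  ultimately show ?thesis
    using assms(2) by (simp add: inner_diff_left)
qed

lemma vertex_solutions_near_maximizer_direction:
  assumes fin: "finite S" and ps: "positive_spanning S" and unit: "\<forall>d\<in>S. norm d = 1"
  obtains u e where "norm u = 1" "e > 0"
    "\<And>c y. norm (c - u) < e \<Longrightarrow> is_vertex_solution S c y \<Longrightarrow> \<forall>x\<in>polyP S. norm x \<le> norm y"
proof -
  let ?P = "polyP S"
  have "0 \<in> ?P"
    by (simp add: polyP_def)
  then obtain z where z: "z \<in> ?P" "\<forall>x\<in>?P. norm x \<le> norm z"
    using continuous_attains_sup[OF compact_polyP[OF fin ps], of norm] continuous_on_norm_id
    by blast
  define M where "M = norm z"
  have "M \<ge> 1"
    using positive_spanning_nonempty[OF ps] subset_polyP_if_unit[OF unit] z unit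
    unfolding M_def by fastforce
  obtain \<eta> where \<eta>: "\<eta> > 0"
    "\<And>y. y extreme_point_of ?P \<Longrightarrow> norm y < M \<Longrightarrow> norm y \<le> M - \<eta>"
    using finite_gap_below[OF finite_polyhedron_extreme_points[OF polyhedron_polyP[OF fin]], of norm M]
    by (metis mem_Collect_eq)
  show thesis
  proof
    show "norm (sgn z) = 1"
      using \<open>M \<ge> 1\<close> unfolding M_def by (auto simp: norm_sgn)
    show "\<eta> / (2 * M) > 0"
      using \<eta>(1) \<open>M \<ge> 1\<close> by simp
    show "\<forall>x\<in>?P. norm x \<le> norm y"
      if c: "norm (c - sgn z) < \<eta> / (2 * M)" and y: "is_vertex_solution S c y" for c y
    proof -
      have "norm y \<le> M" "inner c z \<le> inner c y"
        using y z unfolding M_def is_vertex_solution_def by auto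
      then have "M - 2 * norm (c - sgn z) * M \<le> norm y"
        using norm_ge_if_inner_le_near_sgn[of y z c] unfolding M_def by blast
      moreover have "2 * norm (c - sgn z) * M < \<eta>"
        using c \<open>M \<ge> 1\<close> by (simp add: field_simps)
      ultimately have "\<not> norm y < M"
        using \<eta>(2)[of y] y unfolding is_vertex_solution_def by force
      then show ?thesis
        using z unfolding M_def by force
    qed
  qed
qed

lemma alg_v_in_polyP:
  assumes "\<And>k. vert k (c k) \<in> polyP S"
  shows "alg_v vert c k \<in> polyP S"
  using assms by (induction k) (simp_all add: polyP_def Let_def)

lemma incseq_norm_alg_v: "incseq (\<lambda>k. norm (alg_v vert c k))"
  by (rule incseq_SucI) (simp add: Let_def)

lemma norm_vert_le_alg_v_Suc: "norm (vert k (c k)) \<le> norm (alg_v vert c (Suc k))"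
  by (simp add: Let_def)

lemma alg_v_maximizer_after:
  assumes "\<And>k. vert k (c k) \<in> polyP S" and "\<forall>x\<in>polyP S. norm x \<le> norm (vert k0 (c k0))"
    and "k0 < k"
  shows "alg_v vert c k \<in> polyP S \<and> (\<forall>x\<in>polyP S. norm x \<le> norm (alg_v vert c k))"
proof -
  have "norm (vert k0 (c k0)) \<le> norm (alg_v vert c k)"
    using norm_vert_le_alg_v_Suc[of vert k0 c] assms(3)
      incseqD[OF incseq_norm_alg_v[of vert c], of "Suc k0" k]
    by linarith
  then show ?thesis
    using alg_v_in_polyP[of vert c, OF assms(1)] assms(2) order_trans by blast
qed

lemma alg_v_eventually_optimal:
  assumes "finite S" "positive_spanning S" "\<forall>d\<in>S. norm d = 1"
    and vs: "\<And>k. is_vertex_solution S (c k) (vert k (c k))"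
    and "\<forall>x\<in>polyP S. norm x \<le> norm (vert k0 (c k0))"
  shows "\<exists>K. \<forall>k\<ge>K. (let v = alg_v vert c k in
           v \<in> polyP S \<and> (\<forall>x\<in>polyP S. (norm x)\<^sup>2 \<le> (norm v)\<^sup>2)
           \<and> cosine_vector S (v /\<^sub>R norm v)
           \<and> 1 / norm v = cos_measure S)"
proof (intro exI[of _ "Suc k0"] allI impI)
  fix k assume "Suc k0 \<le> k"
  moreover have "vert j (c j) \<in> polyP S" for j
    using vs unfolding is_vertex_solution_def by blast
  ultimately have "alg_v vert c k \<in> polyP S" "\<forall>x\<in>polyP S. norm x \<le> norm (alg_v vert c k)"
    using alg_v_maximizer_after[of vert c S k0 k] assms(5) by auto
  with cosine_vector_of_norm_maximizer[OF assms(1-3)]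
  show "let v = alg_v vert c k in v \<in> polyP S \<and> (\<forall>x\<in>polyP S. (norm x)\<^sup>2 \<le> (norm v)\<^sup>2)
      \<and> cosine_vector S (v /\<^sub>R norm v) \<and> 1 / norm v = cos_measure S"
    by (simp add: Let_def power_mono)
qed

lemma prob_space_unif_sphere: "prob_space (unif_sphere :: 'a::euclidean_space measure)"
proof -
  have "unit_ball_vol (real DIM('a)) > 0"
    by simp
  then have "emeasure lborel (ball (0::'a) 1) \<noteq> 0"
    by (simp add: emeasure_ball less_imp_neq[symmetric])
  then show ?thesis
    unfolding unif_sphere_def
    by (intro prob_space.prob_space_distr prob_space_uniform_measure)
      (use emeasure_lborel_ball_finite[of "0::'a" 1] in auto)
qed

lemma AE_unif_sphere_norm: "AE x in (unif_sphere :: 'a::euclidean_space measure). norm x = 1"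
proof -
  have "AE x in uniform_measure lborel (ball (0::'a) 1). norm (sgn x) = 1"
    by (intro AE_uniform_measureI)
      (auto intro: eventually_mono[OF AE_lborel_singleton[of 0]] simp: norm_sgn)
  then show ?thesis
    unfolding unif_sphere_def by (subst AE_distr_iff) auto
qed

lemma emeasure_unif_sphere_ball_pos:
  fixes u :: "'a::euclidean_space"
  assumes "norm u = 1" "e > 0"
  shows "emeasure unif_sphere (ball u e) > 0"
proof -
  let ?U = "ball 0 1 \<inter> sgn -` ball u e"
  have sets_sgn: "sgn -` ball u e \<in> sets borel"
    using measurable_sets[OF borel_measurable_sgn borel_open[of "ball u e"]] by simp
  then have sets_U: "?U \<in> sets lborel"
    by simp
  have "continuous_on (-{0::'a}) sgn"
    by (intro continuous_on_sgn continuous_on_id) auto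
  then have "open (sgn -` ball u e \<inter> -{0})"
    using continuous_on_open_vimage[of "-{0::'a}" sgn] by (simp add: open_Compl)
  then have "open (ball 0 1 \<inter> (sgn -` ball u e \<inter> -{0}))"
    by (simp add: open_Int)
  moreover have "u /\<^sub>R 2 \<in> ball 0 1 \<inter> (sgn -` ball u e \<inter> -{0})"
    using assms by (auto simp: sgn_div_norm)
  ultimately obtain r where r: "r > 0" "ball (u /\<^sub>R 2) r \<subseteq> ball 0 1 \<inter> (sgn -` ball u e \<inter> -{0})"
    by (meson open_contains_ball_eq)
  have "0 < emeasure lborel (ball (u /\<^sub>R 2) r)"
    using r by (simp add: emeasure_ball)
  also have "\<dots> \<le> emeasure lborel ?U"
    using r(2) sets_U by (intro emeasure_mono) auto
  finally have "0 < emeasure lborel ?U" .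
  moreover have "emeasure unif_sphere (ball u e) = emeasure lborel ?U / emeasure lborel (ball (0::'a) 1)"
    using sets_sgn unfolding unif_sphere_def
    by (simp add: emeasure_distr emeasure_uniform_measure Int_commute)
  ultimately show ?thesis
    using emeasure_lborel_ball_finite[of "0::'a" 1]
    by (simp add: ennreal_zero_less_divide)
qed

lemma AE_PiM_ex_component_in:
  assumes Q: "prob_space Q" and B: "B \<in> sets Q" and pos: "emeasure Q B > 0"
  shows "AE \<omega> in PiM UNIV (\<lambda>_::nat. Q). \<exists>k. \<omega> k \<in> B"
proof -
  interpret Q: prob_space Q by (rule Q)
  interpret product_prob_space "\<lambda>_::nat. Q" UNIV by (rule product_prob_spaceI) (rule Q)
  let ?P = "PiM UNIV (\<lambda>_::nat. Q)"
  define p where "p = Q.prob B"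
  have p: "0 < p" "p \<le> 1"
    using pos unfolding p_def by (auto simp: Q.emeasure_eq_measure)
  define N where "N = {\<omega>\<in>space ?P. \<forall>k. \<omega> k \<in> space Q - B}"
  have "N = (\<Inter>k. {\<omega>\<in>space ?P. \<omega> k \<in> space Q - B})"
    by (auto simp: N_def)
  also have "\<dots> \<in> sets ?P"
    using B by measurable
  finally have sets_N: "N \<in> sets ?P" .
  have "P.prob N \<le> (1 - p) ^ n" for n
  proof -
    let ?C = "{\<omega>\<in>space ?P. \<forall>i\<in>{..<n}. \<omega> i \<in> space Q - B}"
    have "emeasure ?P ?C = (\<Prod>i<n. emeasure Q (space Q - B))"
      using B by (intro emeasure_PiM_Collect) auto
    also have "\<dots> = ennreal ((1 - p) ^ n)"
      using B p by (simp add: Q.emeasure_eq_measure Q.prob_compl p_def prod_ennreal ennreal_power)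
    finally have "P.prob ?C = (1 - p) ^ n"
      using p by (simp add: P.emeasure_eq_measure)
    moreover have "N \<subseteq> ?C"
      by (auto simp: N_def)
    moreover have "?C \<in> sets ?P"
      using B by measurable
    ultimately show ?thesis
      using P.finite_measure_mono[of N ?C] by linarith
  qed
  moreover have "(\<lambda>n. (1 - p) ^ n) \<longlonglongrightarrow> 0"
    using p by (intro LIMSEQ_power_zero) auto
  ultimately have "P.prob N \<le> 0"
    by (intro LIMSEQ_le_const) auto
  then have "N \<in> null_sets ?P"
    using sets_N by (simp add: P.emeasure_eq_measure null_setsI measure_le_0_iff)
  then show ?thesis
    by (rule AE_I') (auto simp: N_def space_PiM PiE_iff)
qed

theorem theorem9:
  fixes S :: "'a::euclidean_space set" and vert :: "nat \<Rightarrow> 'a \<Rightarrow> 'a"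
  assumes "finite S" and "positive_spanning S" and "\<forall>d\<in>S. norm d = 1"
    and "\<forall>k c. norm c = 1 \<longrightarrow> is_vertex_solution S c (vert k c)"
  shows "AE \<omega> in PiM UNIV (\<lambda>_::nat. unif_sphere).
           \<exists>K. \<forall>k\<ge>K. (let v = alg_v vert \<omega> k in
              v \<in> polyP S \<and> (\<forall>x\<in>polyP S. (norm x)\<^sup>2 \<le> (norm v)\<^sup>2)
              \<and> cosine_vector S (v /\<^sub>R norm v)
              \<and> 1 / norm v = cos_measure S)"
proof -
  obtain u e where u: "norm u = 1" "e > 0" and near:
    "\<And>c y. norm (c - u) < e \<Longrightarrow> is_vertex_solution S c y \<Longrightarrow> \<forall>x\<in>polyP S. norm x \<le> norm y"
    using vertex_solutions_near_maximizer_direction[OF assms(1-3)] by blast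
  interpret product_prob_space "\<lambda>_::nat. unif_sphere :: 'a measure" UNIV
    by (rule product_prob_spaceI) (rule prob_space_unif_sphere)
  have "ball u e \<in> sets unif_sphere"
    by (simp add: unif_sphere_def)
  then have "AE \<omega> in PiM UNIV (\<lambda>_::nat. unif_sphere). \<exists>k. \<omega> k \<in> ball u e"
    by (rule AE_PiM_ex_component_in[OF prob_space_unif_sphere _ emeasure_unif_sphere_ball_pos[OF u]])
  moreover have "AE \<omega> in PiM UNIV (\<lambda>_::nat. unif_sphere). \<forall>k. norm (\<omega> k :: 'a) = 1"
    by (subst AE_all_countable) (auto intro: AE_component AE_unif_sphere_norm)
  ultimately show ?thesis
  proof eventually_elim
    case (elim \<omega>)
    then obtain k0 where "norm (\<omega> k0 - u) < e"
      by (auto simp: dist_norm norm_minus_commute)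
    moreover have "is_vertex_solution S (\<omega> k) (vert k (\<omega> k))" for k
      using elim assms(4) by blast
    ultimately show ?case
      using alg_v_eventually_optimal[OF assms(1-3)] near by blast
  qed
qed

end
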